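(* Let $P$ and $Q$ be finite posets with $\mathbb{E}(\mathrm{uni}_P;\mathrm{ddeg})=\mathbb{E}(\mathrm{uni}_Q;\mathrm{ddeg})$. If $P$ and $Q$ are both CDE then the disjoint union $P+Q$ is CDE. If $P$ and $Q$ are both mCDE then $P+Q$ is mCDE.
   Context: All posets are finite. $\mathbb{E}(\mu;f)=\sum_p f(p)\mathbb{P}(\mu;p)$. $\mathrm{ddeg}(p)$ is the number of elements covered by $p$; $\mathrm{uni}_P$ is the uniform distribution on $P$. $\mathrm{maxchain}_P$ is the distribution on $P$ giving each $p$ probability proportional to the number of maximal chains of $P$ containing $p$. $P$ is CDE if $\mathbb{E}(\mathrm{maxchain}_P;\mathrm{ddeg})=\mathbb{E}(\mathrm{uni}_P;\mathrm{ddeg})$. A $k$-chain is $c_0<\cdots<c_k$; $\mathrm{chain}(k)_P$ gives $p$ probability $\#\{k\text{-chains }c\ni p\}/((k+1)\#\{k\text{-chains}\})$. If $r$ is the length of a longest chain in $P$, $P$ is mCDE if $\mathbb{E}(\mathrm{chain}(k)_P;\mathrm{ddeg})=\mathbb{E}(\mathrm{uni}_P;\mathrm{ddeg})$ for all $k=0,\ldots,r$. $P+Q$ is the disjoint union, with $x\le y$ iff both lie in $P$ and $x\le_P y$ or both lie in $Q$ and $x\le_Q y$. *)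

theory Defs
  imports Complex_Main
begin

definition finite_poset :: "'a set \<Rightarrow> 'a rel \<Rightarrow> bool" where
  "finite_poset P R \<longleftrightarrow> finite P \<and> R \<subseteq> P \<times> P \<and> partial_order_on P R"

definition pless :: "'a rel \<Rightarrow> 'a \<Rightarrow> 'a \<Rightarrow> bool" where
  "pless R x y \<longleftrightarrow> (x, y) \<in> R \<and> x \<noteq> y"

definition covered_by :: "'a set \<Rightarrow> 'a rel \<Rightarrow> 'a \<Rightarrow> 'a \<Rightarrow> bool" where
  "covered_by P R q p \<longleftrightarrow> q \<in> P \<and> p \<in> P \<and> pless R q p \<and>
     \<not> (\<exists>z\<in>P. pless R q z \<and> pless R z p)"

definition ddeg :: "'a set \<Rightarrow> 'a rel \<Rightarrow> 'a \<Rightarrow> nat" where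
  "ddeg P R p = card {q \<in> P. covered_by P R q p}"

definition E_uni_ddeg :: "'a set \<Rightarrow> 'a rel \<Rightarrow> real" where
  "E_uni_ddeg P R = (\<Sum>p\<in>P. real (ddeg P R p) * (1 / real (card P)))"

definition is_chain :: "'a set \<Rightarrow> 'a rel \<Rightarrow> 'a set \<Rightarrow> bool" where
  "is_chain P R C \<longleftrightarrow> C \<subseteq> P \<and> (\<forall>x\<in>C. \<forall>y\<in>C. (x, y) \<in> R \<or> (y, x) \<in> R)"

definition maximal_chains :: "'a set \<Rightarrow> 'a rel \<Rightarrow> 'a set set" where
  "maximal_chains P R = {C. is_chain P R C \<and> \<not> (\<exists>D. is_chain P R D \<and> C \<subset> D)}"

definition maxchain_prob :: "'a set \<Rightarrow> 'a rel \<Rightarrow> 'a \<Rightarrow> real" where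
  "maxchain_prob P R p =
     real (card {C \<in> maximal_chains P R. p \<in> C}) /
     (\<Sum>q\<in>P. real (card {C \<in> maximal_chains P R. q \<in> C}))"

definition E_maxchain_ddeg :: "'a set \<Rightarrow> 'a rel \<Rightarrow> real" where
  "E_maxchain_ddeg P R = (\<Sum>p\<in>P. real (ddeg P R p) * maxchain_prob P R p)"

definition CDE :: "'a set \<Rightarrow> 'a rel \<Rightarrow> bool" where
  "CDE P R \<longleftrightarrow> E_maxchain_ddeg P R = E_uni_ddeg P R"

definition k_chains :: "'a set \<Rightarrow> 'a rel \<Rightarrow> nat \<Rightarrow> 'a list set" where
  "k_chains P R k = {cs. length cs = k + 1 \<and> set cs \<subseteq> P \<and> sorted_wrt (pless R) cs}"

definition chain_prob :: "'a set \<Rightarrow> 'a rel \<Rightarrow> nat \<Rightarrow> 'a \<Rightarrow> real" where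
  "chain_prob P R k p =
     real (card {cs \<in> k_chains P R k. p \<in> set cs}) /
     (real (k + 1) * real (card (k_chains P R k)))"

definition E_chain_ddeg :: "'a set \<Rightarrow> 'a rel \<Rightarrow> nat \<Rightarrow> real" where
  "E_chain_ddeg P R k = (\<Sum>p\<in>P. real (ddeg P R p) * chain_prob P R k p)"

definition poset_height :: "'a set \<Rightarrow> 'a rel \<Rightarrow> nat" where
  "poset_height P R = Max {k. k_chains P R k \<noteq> {}}"

definition mCDE :: "'a set \<Rightarrow> 'a rel \<Rightarrow> bool" where
  "mCDE P R \<longleftrightarrow> (\<forall>k \<le> poset_height P R. E_chain_ddeg P R k = E_uni_ddeg P R)"

definition sum_rel :: "'a rel \<Rightarrow> 'b rel \<Rightarrow> ('a + 'b) rel" where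
  "sum_rel R S = {(Inl x, Inl y) | x y. (x, y) \<in> R} \<union> {(Inr x, Inr y) | x y. (x, y) \<in> S}"

end

theory Submission
  imports Defs
begin

text \<open>
  Both conditions say that a certain weighting of the elements reproduces the uniform mean
  \<open>e\<close> of the down-degree: with \<open>w p\<close> the number of maximal chains (resp. of \<open>k\<close>-chains)
  through \<open>p\<close>, the mean is \<open>\<Sum> ddeg p * w p / \<Sum> w p\<close>, and for a nonempty poset the
  condition is the identity \<open>\<Sum> ddeg p * w p = e * \<Sum> w p\<close>. In \<open>P + Q\<close> every chain lies in
  one summand, so down-degrees and chain counts of the summands are unchanged, and the two
  identities for \<open>P\<close> and \<open>Q\<close> add up to the one for \<open>P + Q\<close>, whose uniform mean is again
  \<open>e\<close> because the summands have the same uniform mean.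
\<close>

definition ddeg_balanced :: "'a set \<Rightarrow> 'a rel \<Rightarrow> ('a \<Rightarrow> real) \<Rightarrow> bool" where
  "ddeg_balanced P R w \<longleftrightarrow>
     (\<Sum>p\<in>P. real (ddeg P R p) * w p) = E_uni_ddeg P R * (\<Sum>p\<in>P. w p)"

lemma sum_ddeg_eq_E_uni_ddeg:
  assumes "finite P"
  shows "(\<Sum>p\<in>P. real (ddeg P R p)) = E_uni_ddeg P R * card P"
  using assms by (cases "P = {}") (simp_all add: E_uni_ddeg_def sum_divide_distrib[symmetric])

lemma ddeg_balanced_iff_mean:
  assumes "(\<Sum>p\<in>P. w p) \<noteq> 0"
  shows "ddeg_balanced P R w \<longleftrightarrow>
    (\<Sum>p\<in>P. real (ddeg P R p) * w p) / (\<Sum>p\<in>P. w p) = E_uni_ddeg P R"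
  using assms by (auto simp: ddeg_balanced_def field_simps)

lemma ddeg_balanced_zero_weights:
  assumes "\<forall>p\<in>P. w p = 0"
  shows "ddeg_balanced P R w"
  using assms by (simp add: ddeg_balanced_def)

subsection \<open>Chains\<close>

lemma sorted_wrt_comparable:
  "sorted_wrt r xs \<Longrightarrow> x \<in> set xs \<Longrightarrow> y \<in> set xs \<Longrightarrow> x = y \<or> r x y \<or> r y x"
  by (induction xs) auto

lemma sorted_wrt_pless_distinct: "sorted_wrt (pless R) xs \<Longrightarrow> distinct xs"
  by (induction xs) (auto simp: pless_def)

lemma finite_k_chains: "finite P \<Longrightarrow> finite (k_chains P R k)"
  by (rule finite_subset[OF _ finite_lists_length_eq[of P "k + 1"]]) (auto simp: k_chains_def)

lemma k_chains_length_le_card: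
  assumes "finite P" "cs \<in> k_chains P R k"
  shows "k + 1 \<le> card P"
proof -
  have "card (set cs) = k + 1"
    using assms(2) by (auto simp: k_chains_def distinct_card sorted_wrt_pless_distinct)
  then show ?thesis
    using assms card_mono[of P "set cs"] by (auto simp: k_chains_def)
qed

lemma finite_nonempty_k_chains: "finite P \<Longrightarrow> finite {k. k_chains P R k \<noteq> {}}"
  by (rule finite_subset[of _ "{..card P}"]) (auto dest: k_chains_length_le_card)

lemma le_poset_height: "finite P \<Longrightarrow> k_chains P R k \<noteq> {} \<Longrightarrow> k \<le> poset_height P R"
  unfolding poset_height_def by (rule Max_ge) (auto intro: finite_nonempty_k_chains)

lemma k_chains_nonempty_if_le_poset_height:
  assumes "finite P" "P \<noteq> {}" "k \<le> poset_height P R"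
  shows "k_chains P R k \<noteq> {}"
proof -
  obtain x where "x \<in> P" using assms(2) by blast
  then have "[x] \<in> k_chains P R 0" by (simp add: k_chains_def)
  then have "poset_height P R \<in> {k. k_chains P R k \<noteq> {}}"
    unfolding poset_height_def by (intro Max_in finite_nonempty_k_chains assms(1)) blast
  then obtain cs where cs: "cs \<in> k_chains P R (poset_height P R)" by blast
  have "take (k + 1) cs \<in> k_chains P R k"
    using cs assms(3) by (auto simp: k_chains_def min_def dest: in_set_takeD)
  then show ?thesis by blast
qed

lemma sum_card_k_chains_containing:
  assumes "finite P"
  shows "(\<Sum>p\<in>P. card {cs \<in> k_chains P R k. p \<in> set cs}) = (k + 1) * card (k_chains P R k)"
proof -
  let ?K = "k_chains P R k"
  have "card {cs \<in> ?K. p \<in> set cs} = (\<Sum>cs\<in>?K. if p \<in> set cs then 1 else 0)" for p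
    using finite_k_chains[OF assms] by (simp add: sum.If_cases Int_def)
  then have "(\<Sum>p\<in>P. card {cs \<in> ?K. p \<in> set cs}) = (\<Sum>p\<in>P. \<Sum>cs\<in>?K. if p \<in> set cs then 1 else 0)"
    by (simp only:)
  also have "\<dots> = (\<Sum>cs\<in>?K. \<Sum>p\<in>P. if p \<in> set cs then 1 else 0)"
    by (rule sum.swap)
  also have "\<dots> = (\<Sum>cs\<in>?K. k + 1)"
  proof (rule sum.cong)
    fix cs assume cs: "cs \<in> ?K"
    then have "distinct cs" "length cs = k + 1" "set cs \<subseteq> P"
      by (auto simp: k_chains_def intro: sorted_wrt_pless_distinct)
    then show "(\<Sum>p\<in>P. if p \<in> set cs then 1 else 0) = k + 1"
      using assms by (simp add: sum.If_cases Int_absorb1 distinct_card)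
  qed simp
  finally show ?thesis by simp
qed

lemma maximal_chain_exists:
  assumes "finite_poset P R" "x \<in> P"
  obtains C where "C \<in> maximal_chains P R" "x \<in> C"
proof -
  let ?chains = "{C. is_chain P R C}"
  have "?chains \<subseteq> Pow P" "finite P"
    using assms(1) by (auto simp: finite_poset_def is_chain_def)
  then have "finite ?chains"
    by (meson finite_Pow_iff finite_subset)
  moreover have "(x, x) \<in> R"
    using assms by (simp add: finite_poset_def partial_order_on_def preorder_on_def refl_on_def)
  with assms(2) have "{x} \<in> ?chains"
    by (simp add: is_chain_def)
  ultimately obtain C where "C \<in> ?chains" "{x} \<subseteq> C" "\<forall>D\<in>?chains. C \<subseteq> D \<longrightarrow> C = D"
    using finite_has_maximal2[of ?chains "{x}"] by blast
  then have "C \<in> maximal_chains P R" "x \<in> C"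
    unfolding maximal_chains_def by blast+
  then show ?thesis by (rule that)
qed

lemma CDE_iff_ddeg_balanced:
  assumes "finite_poset P R"
  shows "CDE P R \<longleftrightarrow> ddeg_balanced P R (\<lambda>p. card {C \<in> maximal_chains P R. p \<in> C})"
proof (cases "P = {}")
  case True
  then show ?thesis
    by (simp add: CDE_def E_maxchain_ddeg_def E_uni_ddeg_def ddeg_balanced_def)
next
  case False
  then obtain x where x: "x \<in> P" by blast
  then obtain C where C: "C \<in> maximal_chains P R" "x \<in> C"
    using maximal_chain_exists[OF assms] by blast
  have fin: "finite P"
    using assms by (simp add: finite_poset_def)
  have "{C \<in> maximal_chains P R. x \<in> C} \<subseteq> Pow P"
    by (auto simp: maximal_chains_def is_chain_def)
  then have "finite {C \<in> maximal_chains P R. x \<in> C}"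
    by (rule finite_subset) (simp add: fin)
  with C have "card {C \<in> maximal_chains P R. x \<in> C} > 0"
    by (auto simp: card_gt_0_iff)
  then have "(\<Sum>p\<in>P. real (card {C \<in> maximal_chains P R. p \<in> C})) > 0"
    using fin x by (intro sum_pos2[of P x]) auto
  then show ?thesis
    by (simp add: CDE_def E_maxchain_ddeg_def maxchain_prob_def ddeg_balanced_iff_mean
        sum_divide_distrib)
qed

lemma sum_real_card_k_chains_containing:
  assumes "finite P"
  shows "(\<Sum>p\<in>P. real (card {cs \<in> k_chains P R k. p \<in> set cs}))
    = real (k + 1) * real (card (k_chains P R k))"
  using arg_cong[where f = real, OF sum_card_k_chains_containing[OF assms]]
  unfolding of_nat_sum of_nat_mult .

lemma E_chain_ddeg_eq_mean:
  assumes "finite P"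
  shows "E_chain_ddeg P R k =
    (\<Sum>p\<in>P. real (ddeg P R p) * real (card {cs \<in> k_chains P R k. p \<in> set cs}))
      / (\<Sum>p\<in>P. real (card {cs \<in> k_chains P R k. p \<in> set cs}))"
  unfolding sum_real_card_k_chains_containing[OF assms] E_chain_ddeg_def chain_prob_def
  by (simp add: sum_divide_distrib)

lemma ddeg_balanced_k_chains_iff:
  assumes "finite P" "k_chains P R k \<noteq> {}"
  shows "ddeg_balanced P R (\<lambda>p. card {cs \<in> k_chains P R k. p \<in> set cs})
    \<longleftrightarrow> E_chain_ddeg P R k = E_uni_ddeg P R"
proof -
  have "card (k_chains P R k) \<noteq> 0"
    using assms finite_k_chains[OF assms(1)] by simp
  then have weights: "(\<Sum>p\<in>P. real (card {cs \<in> k_chains P R k. p \<in> set cs})) \<noteq> 0"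
    unfolding sum_real_card_k_chains_containing[OF assms(1)] by simp
  show ?thesis
    by (simp only: ddeg_balanced_iff_mean[OF weights] E_chain_ddeg_eq_mean[OF assms(1)])
qed

lemma mCDE_iff_ddeg_balanced:
  assumes "finite_poset P R"
  shows "mCDE P R \<longleftrightarrow>
    (\<forall>k. ddeg_balanced P R (\<lambda>p. card {cs \<in> k_chains P R k. p \<in> set cs}))"
  unfolding mCDE_def
proof (intro iffI allI impI)
  have fin: "finite P"
    using assms by (simp add: finite_poset_def)
  {
    fix k
    assume mCDE: "\<forall>k\<le>poset_height P R. E_chain_ddeg P R k = E_uni_ddeg P R"
    show "ddeg_balanced P R (\<lambda>p. card {cs \<in> k_chains P R k. p \<in> set cs})"
    proof (cases "k_chains P R k = {}")
      case True
      then show ?thesis by (simp add: ddeg_balanced_zero_weights)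
    next
      case False
      then show ?thesis
        using mCDE le_poset_height[OF fin] by (simp add: ddeg_balanced_k_chains_iff[OF fin])
    qed
  next
    fix k
    assume balanced: "\<forall>k. ddeg_balanced P R (\<lambda>p. card {cs \<in> k_chains P R k. p \<in> set cs})"
      and k: "k \<le> poset_height P R"
    show "E_chain_ddeg P R k = E_uni_ddeg P R"
    proof (cases "P = {}")
      case True
      then show ?thesis by (simp add: E_chain_ddeg_def E_uni_ddeg_def)
    next
      case False
      then have "k_chains P R k \<noteq> {}"
        using k fin by (intro k_chains_nonempty_if_le_poset_height)
      moreover have "ddeg_balanced P R (\<lambda>p. card {cs \<in> k_chains P R k. p \<in> set cs})"
        using balanced by (rule spec)
      ultimately show ?thesis
        by (simp add: ddeg_balanced_k_chains_iff[OF fin])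
    qed
  }
qed

subsection \<open>Embeddings onto unions of components\<close>

text \<open>The image of \<open>f\<close> is a union of connected components of the comparability graph of \<open>T\<close>.\<close>

locale component_embedding =
  fixes f :: "'a \<Rightarrow> 'c" and P :: "'a set" and R :: "'a rel" and U :: "'c set" and T :: "'c rel"
  assumes inj: "inj f"
    and rel_iff: "(f x, f y) \<in> T \<longleftrightarrow> (x, y) \<in> R"
    and mem_iff: "f x \<in> U \<longleftrightarrow> x \<in> P"
    and comparable_in_range: "(z, f x) \<in> T \<or> (f x, z) \<in> T \<Longrightarrow> z \<in> range f"
begin

lemma pless_iff: "pless T (f x) (f y) \<longleftrightarrow> pless R x y"
  using inj by (simp add: pless_def rel_iff inj_eq)

lemma covered_by_iff: "covered_by U T q (f a) \<longleftrightarrow> (\<exists>b. q = f b \<and> covered_by P R b a)"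
proof
  assume cov: "covered_by U T q (f a)"
  then have "(q, f a) \<in> T"
    by (simp add: covered_by_def pless_def)
  then obtain b where q: "q = f b"
    using comparable_in_range by blast
  have "\<not> (pless R b z \<and> pless R z a)" if "z \<in> P" for z
    using cov that mem_iff[of z] by (auto simp: covered_by_def q pless_iff)
  then have "covered_by P R b a"
    using cov by (auto simp: covered_by_def q mem_iff pless_iff)
  with q show "\<exists>b. q = f b \<and> covered_by P R b a" by blast
next
  assume "\<exists>b. q = f b \<and> covered_by P R b a"
  then obtain b where q: "q = f b" and cov: "covered_by P R b a" by blast
  have "\<not> (pless T q z \<and> pless T z (f a))" if "z \<in> U" for z
  proof
    assume z: "pless T q z \<and> pless T z (f a)"
    then obtain y where "z = f y"
      using comparable_in_range by (auto simp: pless_def)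
    with z cov \<open>z \<in> U\<close> show False
      by (auto simp: covered_by_def q pless_iff mem_iff)
  qed
  then show "covered_by U T q (f a)"
    using cov by (auto simp: covered_by_def q mem_iff pless_iff)
qed

lemma ddeg_image: "ddeg U T (f a) = ddeg P R a"
proof -
  have "{q \<in> U. covered_by U T q (f a)} = f ` {b \<in> P. covered_by P R b a}"
    by (auto simp: covered_by_iff mem_iff)
  then show ?thesis
    unfolding ddeg_def by (simp add: card_image inj_on_subset[OF inj])
qed

lemma chain_subset_range:
  assumes "is_chain U T D" "f a \<in> D"
  shows "D \<subseteq> range f"
  using assms comparable_in_range unfolding is_chain_def by blast

lemma is_chain_image_iff: "is_chain U T (f ` C) \<longleftrightarrow> is_chain P R C"
  by (auto simp: is_chain_def mem_iff rel_iff)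

lemma maximal_chain_image_iff:
  assumes "a \<in> C"
  shows "f ` C \<in> maximal_chains U T \<longleftrightarrow> C \<in> maximal_chains P R"
proof
  assume max: "f ` C \<in> maximal_chains U T"
  have "\<not> C \<subset> D" if "is_chain P R D" for D
  proof
    assume "C \<subset> D"
    then have "f ` C \<subset> f ` D"
      using inj by (simp add: image_strict_mono inj_on_subset)
    with max that show False
      by (auto simp: maximal_chains_def is_chain_image_iff)
  qed
  with max show "C \<in> maximal_chains P R"
    by (auto simp: maximal_chains_def is_chain_image_iff)
next
  assume max: "C \<in> maximal_chains P R"
  have "\<not> f ` C \<subset> D" if D: "is_chain U T D" for D
  proof
    assume sub: "f ` C \<subset> D"
    then have "D \<subseteq> range f"
      using D assms by (intro chain_subset_range) auto
    then have D_eq: "f ` (f -` D) = D"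
      by (simp add: image_vimage_eq Int_absorb2)
    then have "is_chain P R (f -` D)"
      using D is_chain_image_iff by metis
    moreover have "C \<subset> f -` D"
      using sub D_eq by auto
    ultimately show False
      using max by (auto simp: maximal_chains_def)
  qed
  with max show "f ` C \<in> maximal_chains U T"
    by (auto simp: maximal_chains_def is_chain_image_iff)
qed

lemma card_maximal_chains_containing:
  "card {D \<in> maximal_chains U T. f a \<in> D} = card {C \<in> maximal_chains P R. a \<in> C}"
proof -
  have "{D \<in> maximal_chains U T. f a \<in> D} = image f ` {C \<in> maximal_chains P R. a \<in> C}"
  proof (intro equalityI subsetI)
    fix D assume D: "D \<in> {D \<in> maximal_chains U T. f a \<in> D}"
    then have "D \<subseteq> range f"
      by (intro chain_subset_range[of D a]) (auto simp: maximal_chains_def)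
    then have D_eq: "D = f ` (f -` D)"
      by (simp add: image_vimage_eq Int_absorb2)
    moreover have "a \<in> f -` D"
      using D by simp
    ultimately have "f -` D \<in> {C \<in> maximal_chains P R. a \<in> C}"
      using D maximal_chain_image_iff by (metis (mono_tags, lifting) mem_Collect_eq)
    with D_eq show "D \<in> image f ` {C \<in> maximal_chains P R. a \<in> C}"
      by blast
  qed (auto simp: maximal_chain_image_iff)
  moreover have "inj_on (image f) X" for X :: "'a set set"
    using inj by (simp add: inj_on_def inj_image_eq_iff)
  ultimately show ?thesis
    by (simp add: card_image)
qed

lemma k_chains_map_iff: "map f cs \<in> k_chains U T k \<longleftrightarrow> cs \<in> k_chains P R k"
  by (auto simp: k_chains_def sorted_wrt_map pless_iff mem_iff)

lemma card_k_chains_containing: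
  "card {cs \<in> k_chains U T k. f a \<in> set cs} = card {cs \<in> k_chains P R k. a \<in> set cs}"
proof -
  have "{cs \<in> k_chains U T k. f a \<in> set cs} = map f ` {cs \<in> k_chains P R k. a \<in> set cs}"
  proof (intro equalityI subsetI)
    fix cs assume cs: "cs \<in> {cs \<in> k_chains U T k. f a \<in> set cs}"
    have "set cs \<subseteq> range f"
    proof
      fix x assume "x \<in> set cs"
      with cs have "x = f a \<or> pless T x (f a) \<or> pless T (f a) x"
        by (auto simp: k_chains_def dest: sorted_wrt_comparable)
      then show "x \<in> range f"
        using comparable_in_range by (auto simp: pless_def)
    qed
    then have cs_eq: "cs = map f (map (inv f) cs)"
      by (simp add: map_idI f_inv_into_f subset_iff)
    then have "map (inv f) cs \<in> {cs \<in> k_chains P R k. a \<in> set cs}"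
      using cs k_chains_map_iff inj
      by (metis (mono_tags, lifting) inj_image_mem_iff list.set_map mem_Collect_eq)
    with cs_eq show "cs \<in> map f ` {cs \<in> k_chains P R k. a \<in> set cs}"
      by blast
  qed (auto simp: k_chains_map_iff)
  then show ?thesis
    using inj by (simp add: card_image inj_on_def inj_map_eq_map)
qed

end

subsection \<open>The disjoint union\<close>

lemma mem_sum_rel [simp]:
  "(Inl a, Inl b) \<in> sum_rel R S \<longleftrightarrow> (a, b) \<in> R"
  "(Inr c, Inr d) \<in> sum_rel R S \<longleftrightarrow> (c, d) \<in> S"
  "(Inl a, Inr d) \<notin> sum_rel R S"
  "(Inr c, Inl b) \<notin> sum_rel R S"
  by (auto simp: sum_rel_def)

lemma component_embedding_Inl: "component_embedding Inl P R (P <+> Q) (sum_rel R S)"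
proof
  show "z \<in> range Inl" if "(z, Inl x) \<in> sum_rel R S \<or> (Inl x, z) \<in> sum_rel R S" for z x
    using that by (cases z) auto
qed auto

lemma component_embedding_Inr: "component_embedding Inr Q S (P <+> Q) (sum_rel R S)"
proof
  show "z \<in> range Inr" if "(z, Inr x) \<in> sum_rel R S \<or> (Inr x, z) \<in> sum_rel R S" for z x
    using that by (cases z) auto
qed auto

lemma finite_poset_Plus:
  assumes "finite_poset P R" "finite_poset Q S"
  shows "finite_poset (P <+> Q) (sum_rel R S)"
proof -
  have R: "R \<subseteq> P \<times> P" "refl_on P R" "trans R" "antisym R"
    and S: "S \<subseteq> Q \<times> Q" "refl_on Q S" "trans S" "antisym S"
    using assms by (auto simp: finite_poset_def dest: partial_order_onD)
  have "sum_rel R S \<subseteq> (P <+> Q) \<times> (P <+> Q)"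
    using R(1) S(1) by (auto simp: sum_rel_def)
  moreover have "refl_on (P <+> Q) (sum_rel R S)"
    using R(2) S(2) by (auto simp: refl_on_def)
  moreover have "trans (sum_rel R S)"
  proof (rule transI)
    fix x y z assume "(x, y) \<in> sum_rel R S" "(y, z) \<in> sum_rel R S"
    then show "(x, z) \<in> sum_rel R S"
      using R(3) S(3) by (cases x; cases y; cases z) (auto dest: transD)
  qed
  moreover have "antisym (sum_rel R S)"
  proof (rule antisymI)
    fix x y assume "(x, y) \<in> sum_rel R S" "(y, x) \<in> sum_rel R S"
    then show "x = y"
      using R(4) S(4) by (cases x; cases y) (auto dest: antisymD)
  qed
  ultimately show ?thesis
    using assms by (simp add: finite_poset_def partial_order_on_def preorder_on_def)
qed

lemma sum_ddeg_weighted_Plus: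
  fixes w :: "'a + 'b \<Rightarrow> real"
  assumes "finite P" "finite Q"
  shows "(\<Sum>x\<in>P <+> Q. real (ddeg (P <+> Q) (sum_rel R S) x) * w x)
    = (\<Sum>a\<in>P. real (ddeg P R a) * w (Inl a)) + (\<Sum>b\<in>Q. real (ddeg Q S b) * w (Inr b))"
  using assms
  by (simp add: sum.Plus component_embedding.ddeg_image[OF component_embedding_Inl]
      component_embedding.ddeg_image[OF component_embedding_Inr])

lemma E_uni_ddeg_Plus:
  assumes "finite P" "finite Q" "E_uni_ddeg P R = E_uni_ddeg Q S"
  shows "E_uni_ddeg (P <+> Q) (sum_rel R S) = E_uni_ddeg P R"
proof (cases "P <+> Q = {}")
  case True
  then have "P = {}" by blast
  then show ?thesis unfolding E_uni_ddeg_def True by simp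
next
  case False
  have "E_uni_ddeg (P <+> Q) (sum_rel R S) * card (P <+> Q)
      = (\<Sum>a\<in>P. real (ddeg P R a)) + (\<Sum>b\<in>Q. real (ddeg Q S b))"
    using sum_ddeg_weighted_Plus[OF assms(1,2), of R S "\<lambda>_. 1"]
      sum_ddeg_eq_E_uni_ddeg[of "P <+> Q" "sum_rel R S"] assms(1,2) by simp
  also have "\<dots> = E_uni_ddeg P R * card (P <+> Q)"
    using assms by (simp add: sum_ddeg_eq_E_uni_ddeg card_Plus distrib_left)
  finally show ?thesis
    using False assms(1,2) by auto
qed

lemma ddeg_balanced_Plus:
  assumes "finite P" "finite Q" "E_uni_ddeg P R = E_uni_ddeg Q S"
    and "\<forall>a\<in>P. w (Inl a) = wP a" "\<forall>b\<in>Q. w (Inr b) = wQ b"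
    and "ddeg_balanced P R wP" "ddeg_balanced Q S wQ"
  shows "ddeg_balanced (P <+> Q) (sum_rel R S) w"
proof -
  have "(\<Sum>x\<in>P <+> Q. real (ddeg (P <+> Q) (sum_rel R S) x) * w x)
      = (\<Sum>a\<in>P. real (ddeg P R a) * wP a) + (\<Sum>b\<in>Q. real (ddeg Q S b) * wQ b)"
    using assms(1,2,4,5) by (simp add: sum_ddeg_weighted_Plus)
  also have "\<dots> = E_uni_ddeg P R * ((\<Sum>a\<in>P. wP a) + (\<Sum>b\<in>Q. wQ b))"
    using assms(3,6,7) by (simp add: ddeg_balanced_def distrib_left)
  also have "\<dots> = E_uni_ddeg (P <+> Q) (sum_rel R S) * (\<Sum>x\<in>P <+> Q. w x)"
    using assms(1-5) by (simp add: E_uni_ddeg_Plus sum.Plus)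
  finally show ?thesis
    unfolding ddeg_balanced_def .
qed

theorem mainTheorem2:
  fixes P :: "'a set" and R :: "'a rel" and Q :: "'b set" and S :: "'b rel"
  assumes "finite_poset P R" and "finite_poset Q S"
    and "E_uni_ddeg P R = E_uni_ddeg Q S"
  shows "(CDE P R \<and> CDE Q S \<longrightarrow> CDE (P <+> Q) (sum_rel R S))
    \<and> (mCDE P R \<and> mCDE Q S \<longrightarrow> mCDE (P <+> Q) (sum_rel R S))"
proof -
  have fin: "finite P" "finite Q"
    using assms(1,2) by (simp_all add: finite_poset_def)
  have PQ: "finite_poset (P <+> Q) (sum_rel R S)"
    using assms(1,2) by (rule finite_poset_Plus)
  interpret left: component_embedding Inl P R "P <+> Q" "sum_rel R S"
    by (rule component_embedding_Inl)
  interpret right: component_embedding Inr Q S "P <+> Q" "sum_rel R S"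
    by (rule component_embedding_Inr)
  have "CDE (P <+> Q) (sum_rel R S)" if "CDE P R" "CDE Q S"
    using that unfolding CDE_iff_ddeg_balanced[OF PQ] CDE_iff_ddeg_balanced[OF assms(1)]
      CDE_iff_ddeg_balanced[OF assms(2)]
    by (intro ddeg_balanced_Plus[OF fin assms(3)])
      (simp_all add: left.card_maximal_chains_containing right.card_maximal_chains_containing)
  moreover have "mCDE (P <+> Q) (sum_rel R S)" if "mCDE P R" "mCDE Q S"
    unfolding mCDE_iff_ddeg_balanced[OF PQ]
  proof
    fix k
    have "ddeg_balanced P R (\<lambda>a. card {cs \<in> k_chains P R k. a \<in> set cs})"
      "ddeg_balanced Q S (\<lambda>b. card {cs \<in> k_chains Q S k. b \<in> set cs})"
      using that by (simp_all add: mCDE_iff_ddeg_balanced assms(1,2))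
    then show "ddeg_balanced (P <+> Q) (sum_rel R S)
        (\<lambda>x. card {cs \<in> k_chains (P <+> Q) (sum_rel R S) k. x \<in> set cs})"
      by (intro ddeg_balanced_Plus[OF fin assms(3)])
        (simp_all add: left.card_k_chains_containing right.card_k_chains_containing)
  qed
  ultimately show ?thesis by blast
qed

end
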